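(* Let $\mathbf b=b_0b_1b_2\cdots\in\{1,-1\}^{\mathbb N}$ be fixed and let $m\ge1$. Let $s_1,s_2\ge 0$ and $d_1,d_2\ge1$ be integers such that $s_2$ and $d_2$ are even. Let $r$ be such that $2^r> s_1+m d_1$, and suppose that for each $i\ge 0$ the following implication holds: if $\mathcal E_{i,1}(s_2,d_2,m)\neq \mathcal E_{i,-1}(s_2,d_2,m)$, then $b_i=b_{i+r}$. Then \[\Delta(s_1,d_1,m)+\Delta(s_2,d_2,m)=\Delta(s_1+2^r s_2,\; d_1+2^r d_2,\; m).\]
   Context: For integers $a$ and $N\ge1$, $(a \bmod N)$ denotes the unique integer in $\{0,\dots,N-1\}$ congruent to $a$ modulo $N$; we write $a\succ c \pmod N$ iff $(a\bmod N)>(c\bmod N)$. For $b\in\{-1,1\}$, $k\ge0$ and integers $0\le\ell\le n$, let $\varepsilon_{k,b}(\ell,n)=1$ if $n-\ell \succ (2+b)\cdot 2^k-(\ell+1) \pmod{2^{k+2}}$ and $\varepsilon_{k,b}(\ell,n)=0$ otherwise. (Equivalently, $\varepsilon_{k,b}(\ell,n)=D_{k,b}(\ell,n)-\lfloor (n-\ell)/2^{k+2}\rfloor$, where $D_{k,b}(\ell,n)$ is the number of integers $i\in(\ell,n]$ with $i\equiv (2+b)2^k \pmod{2^{k+2}}$.) For integers $s\ge0$, $d\ge1$, $m\ge1$ define the vector \[\mathcal E_{k,b}(s,d,m)=\big(\varepsilon_{k,b}(s,s+d),\varepsilon_{k,b}(s+d,s+2d),\dots,\varepsilon_{k,b}(s+(m-1)d,s+md)\big)\]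 and, for the fixed sequence $\mathbf b$, $\Delta(s,d,m)=\sum_{k=0}^{\infty}\mathcal E_{k,b_k}(s,d,m)$ (only finitely many summands are nonzero). *)

theory Defs
  imports Main "HOL-Library.Groups_Big_Fun"
begin

definition succ_mod :: "int \<Rightarrow> int \<Rightarrow> int \<Rightarrow> bool" where
  "succ_mod a c N \<longleftrightarrow> a mod N > c mod N"

definition eps :: "nat \<Rightarrow> int \<Rightarrow> int \<Rightarrow> int \<Rightarrow> int" where
  "eps k b l n = (if succ_mod (n - l) ((2 + b) * 2 ^ k - (l + 1)) (2 ^ (k + 2)) then 1 else 0)"

definition Evec :: "nat \<Rightarrow> int \<Rightarrow> nat \<Rightarrow> nat \<Rightarrow> nat \<Rightarrow> int list" where
  "Evec k b s d m = map (\<lambda>j. eps k b (int (s + j * d)) (int (s + (j + 1) * d))) [0..<m]"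

definition Delta :: "(nat \<Rightarrow> int) \<Rightarrow> nat \<Rightarrow> nat \<Rightarrow> nat \<Rightarrow> int list" where
  "Delta bs s d m = map (\<lambda>j. Sum_any (\<lambda>k. Evec k (bs k) s d m ! j)) [0..<m]"

definition vadd :: "int list \<Rightarrow> int list \<Rightarrow> int list" where
  "vadd xs ys = map2 (+) xs ys"

end

theory Submission
  imports Defs
begin

text \<open>
  Write \<open>c = (2 + b) 2\<^sup>k\<close> and \<open>N = 2\<^sup>k\<^sup>+\<^sup>2\<close>. Then \<open>\<epsilon>\<^sub>k\<^sub>,\<^sub>b(l, n) = 1\<close> exactly when adding
  \<open>n - l\<close> to \<open>l - c\<close> wraps around modulo \<open>N\<close>, i.e. when \<open>(n - c) mod N < (l - c) mod N\<close>;
  this only depends on \<open>l\<close> and \<open>n\<close> modulo \<open>N\<close>. Consider the interval with endpoints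
  \<open>l\<^sub>1 + 2\<^sup>r l\<^sub>2\<close> and \<open>n\<^sub>1 + 2\<^sup>r n\<^sub>2\<close>, where \<open>0 \<le> l\<^sub>1 \<le> n\<^sub>1 < 2\<^sup>r\<close> and \<open>l\<^sub>2, n\<^sub>2\<close> are even.
  For \<open>k < r\<close> the term \<open>2\<^sup>r l\<^sub>2\<close> is divisible by \<open>N\<close>, so the level-\<open>k\<close> value is that of
  \<open>(l\<^sub>1, n\<^sub>1)\<close>; for \<open>k \<ge> r\<close> the low digits \<open>l\<^sub>1, n\<^sub>1\<close> do not affect the comparison of
  residues modulo \<open>2\<^sup>k\<^sup>+\<^sup>2\<close>, so the level-\<open>k\<close> value is that of \<open>(l\<^sub>2, n\<^sub>2)\<close> at level
  \<open>k - r\<close>, but with sign \<open>b\<^sub>k\<close> in place of \<open>b\<^sub>k\<^sub>-\<^sub>r\<close>. The hypothesis on \<open>\<bold>b\<close> says that this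
  mismatch of signs is harmless.
\<close>

lemma mod_add_less_mod_iff:
  fixes x y N :: int
  assumes "N > 0"
  shows "(-x - 1) mod N < y mod N \<longleftrightarrow> (x + y) mod N < x mod N"
proof -
  define u where "u = x mod N"
  define p where "p = y mod N"
  have u: "0 \<le> u" "u < N" and p: "0 \<le> p" "p < N"
    using assms by (auto simp: u_def p_def)
  have "-x - 1 = (N - 1 - u) + N * (- (x div N) - 1)"
    using div_mult_mod_eq[of x N] by (simp add: u_def algebra_simps)
  then have "(-x - 1) mod N = (N - 1 - u) mod N"
    by (simp only: mod_mult_self2)
  then have neg: "(-x - 1) mod N = N - 1 - u"
    using u by (simp add: mod_pos_pos_trivial)
  have "(x + y) mod N = (u + p) mod N"
    by (simp add: u_def p_def mod_add_eq)
  also have "\<dots> = (if u + p < N then u + p else u + p - N)"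
  proof (cases "u + p < N")
    case False
    have "(u + p) mod N = (u + p - N + N) mod N" by simp
    also have "\<dots> = (u + p - N) mod N" by (rule mod_add_self2)
    also have "\<dots> = u + p - N"
      using False u p by (intro mod_pos_pos_trivial) auto
    finally show ?thesis using False by simp
  qed (use u p in \<open>simp add: mod_pos_pos_trivial\<close>)
  finally have sum: "(x + y) mod N = (if u + p < N then u + p else u + p - N)" .
  show ?thesis
    using neg sum p by (simp add: u_def[symmetric] p_def[symmetric])
qed

lemma eps_eq_if_mod_less:
  "eps k b l n =
    (if (n - (2 + b) * 2 ^ k) mod 2 ^ (k + 2) < (l - (2 + b) * 2 ^ k) mod 2 ^ (k + 2) then 1 else 0)"
proof -
  have "succ_mod (n - l) ((2 + b) * 2 ^ k - (l + 1)) (2 ^ (k + 2)) \<longleftrightarrow>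
      ((l - (2 + b) * 2 ^ k) + (n - l)) mod 2 ^ (k + 2) < (l - (2 + b) * 2 ^ k) mod 2 ^ (k + 2)"
    unfolding succ_mod_def
    using mod_add_less_mod_iff[of "2 ^ (k + 2)" "l - (2 + b) * 2 ^ k" "n - l"]
    by (simp add: algebra_simps)
  then show ?thesis
    unfolding eps_def by simp
qed

lemma eps_eq_0_if_less_power:
  assumes "b \<in> {1, -1}" "0 \<le> l" "l \<le> n" "n < 2 ^ k"
  shows "eps k b l n = 0"
proof -
  have c: "2 ^ k \<le> (2 + b) * 2 ^ k" "(2 + b) * 2 ^ k < (2::int) ^ (k + 2)"
    using assms(1) by auto
  have "(n - l) mod 2 ^ (k + 2) = n - l"
    using assms c by (intro mod_pos_pos_trivial) auto
  moreover have "((2 + b) * 2 ^ k - (l + 1)) mod 2 ^ (k + 2) = (2 + b) * 2 ^ k - (l + 1)"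
    using assms c by (intro mod_pos_pos_trivial) auto
  ultimately show ?thesis
    using assms c unfolding eps_def succ_mod_def by auto
qed

lemma eps_add_multiples:
  assumes "2 ^ (k + 2) dvd t" "2 ^ (k + 2) dvd u"
  shows "eps k b (l + t) (n + u) = eps k b l n"
proof -
  have shift: "(a + c) mod 2 ^ (k + 2) = a mod 2 ^ (k + 2)" if "2 ^ (k + 2) dvd c" for a c :: int
    using that by (auto elim!: dvdE)
  have "n + u - (l + t) = (n - l) + (u - t)" "(2 + b) * 2 ^ k - (l + t + 1) = ((2 + b) * 2 ^ k - (l + 1)) + - t"
    by simp_all
  then show ?thesis
    unfolding eps_def succ_mod_def using assms by (simp only: shift dvd_diff dvd_minus_iff)
qed

lemma eps_add_high_even:
  assumes "k < r" "even l'" "even n'"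
  shows "eps k b (l + 2 ^ r * l') (n + 2 ^ r * n') = eps k b l n"
proof (rule eps_add_multiples)
  have "(2::int) ^ (k + 2) dvd 2 ^ (r + 1)"
    using assms(1) by (intro le_imp_power_dvd) simp
  then show "2 ^ (k + 2) dvd 2 ^ r * l'" "2 ^ (k + 2) dvd 2 ^ r * n'"
    using assms(2,3) by (auto elim!: evenE intro: dvd_trans simp: mult_ac)
qed

lemma add_mult_mod_mult:
  fixes a x M N :: int
  assumes "0 \<le> a" "a < M" "N > 0"
  shows "(a + M * x) mod (M * N) = a + M * (x mod N)"
proof -
  have "(a + M * x) div M = x" "(a + M * x) mod M = a"
    using assms by (simp_all add: div_pos_pos_trivial mod_pos_pos_trivial)
  then show ?thesis
    using zmod_zmult2_eq[of N "a + M * x" M] assms(3) by simp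
qed

lemma add_mult_less_add_mult_iff:
  fixes l n x y M :: int
  assumes "0 \<le> l" "l \<le> n" "n < M"
  shows "n + M * x < l + M * y \<longleftrightarrow> x < y"
proof
  assume "x < y"
  then have "M * (x + 1) \<le> M * y"
    using assms by (intro mult_left_mono) auto
  then show "n + M * x < l + M * y"
    using assms by (simp add: algebra_simps)
next
  assume less: "n + M * x < l + M * y"
  show "x < y"
  proof (rule ccontr)
    assume "\<not> x < y"
    then have "M * y \<le> M * x"
      using assms by (intro mult_left_mono) auto
    then show False
      using less assms by linarith
  qed
qed

lemma eps_add_high_shift:
  fixes l n l' n' :: int
  assumes "0 \<le> l" "l \<le> n" "n < 2 ^ r"
  shows "eps (k + r) b (l + 2 ^ r * l') (n + 2 ^ r * n') = eps k b l' n'"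
proof -
  define c where "c = (2 + b) * 2 ^ k"
  have N: "(2::int) ^ (k + r + 2) = 2 ^ r * 2 ^ (k + 2)" and C: "(2 + b) * 2 ^ (k + r) = 2 ^ r * c"
    by (simp_all add: c_def power_add)
  have "(z + 2 ^ r * z' - (2 + b) * 2 ^ (k + r)) mod 2 ^ (k + r + 2) = z + 2 ^ r * ((z' - c) mod 2 ^ (k + 2))"
    if "0 \<le> z" "z < 2 ^ r" for z z' :: int
    unfolding N C using add_mult_mod_mult[of z "2 ^ r" "2 ^ (k + 2)" "z' - c"] that
    by (simp add: algebra_simps)
  then show ?thesis
    using assms add_mult_less_add_mult_iff[OF assms]
    unfolding eps_eq_if_mod_less[of "k + r"] eps_eq_if_mod_less[of k] c_def
    by simp
qed

lemma Sum_any_eps_eq_sum_lessThan: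
  assumes "\<forall>k. bs k \<in> {1, -1}" "0 \<le> l" "l \<le> n" "n < 2 ^ K"
  shows "Sum_any (\<lambda>k. eps k (bs k) l n) = (\<Sum>k<K. eps k (bs k) l n)"
proof (rule Sum_any.expand_superset)
  show "{k. eps k (bs k) l n \<noteq> 0} \<subseteq> {..<K}"
  proof (rule subsetI, rule ccontr)
    fix k assume "k \<in> {k. eps k (bs k) l n \<noteq> 0}" "k \<notin> {..<K}"
    moreover have "(2::int) ^ K \<le> 2 ^ k"
      using \<open>k \<notin> {..<K}\<close> by simp
    then have "n < 2 ^ k"
      using assms(4) by linarith
    ultimately show False
      using eps_eq_0_if_less_power assms by auto
  qed
qed simp

lemma sum_lessThan_add_shift:
  fixes r K :: nat
  shows "sum f {..<r + K} = sum f {..<r} + (\<Sum>k<K. f (k + r))"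
  by (induction K) (simp_all add: ac_simps)

lemma Sum_any_eps_concat:
  fixes l n l' n' :: int
  assumes bs: "\<forall>k. bs k \<in> {1, -1}"
    and low: "0 \<le> l" "l \<le> n" "n < 2 ^ r"
    and high: "0 \<le> l'" "l' \<le> n'" "even l'" "even n'"
    and compatible: "\<forall>k. eps k 1 l' n' \<noteq> eps k (-1) l' n' \<longrightarrow> bs k = bs (k + r)"
  shows "Sum_any (\<lambda>k. eps k (bs k) l n) + Sum_any (\<lambda>k. eps k (bs k) l' n') =
    Sum_any (\<lambda>k. eps k (bs k) (l + 2 ^ r * l') (n + 2 ^ r * n'))"
proof -
  define K where "K = nat n'"
  have "int K < int (2 ^ K)"
    by (simp only: of_nat_less_iff less_exp)
  then have "n' < 2 ^ K"
    using high by (simp add: K_def)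
  then have "2 ^ r * (n' + 1) \<le> (2::int) ^ r * 2 ^ K"
    by (intro mult_left_mono) auto
  then have concat_bound: "n + 2 ^ r * n' < 2 ^ (r + K)"
    using low by (simp add: power_add algebra_simps)
  have shifted: "eps (k + r) (bs (k + r)) (l + 2 ^ r * l') (n + 2 ^ r * n') = eps k (bs k) l' n'" for k
  proof -
    have "eps k (bs (k + r)) l' n' = eps k (bs k) l' n'"
      using bs compatible by (metis insertE singletonD)
    then show ?thesis
      using eps_add_high_shift[OF low] by simp
  qed
  have "Sum_any (\<lambda>k. eps k (bs k) (l + 2 ^ r * l') (n + 2 ^ r * n')) =
      (\<Sum>k<r + K. eps k (bs k) (l + 2 ^ r * l') (n + 2 ^ r * n'))"
    using low high concat_bound
    by (intro Sum_any_eps_eq_sum_lessThan[OF bs]) (simp_all add: add_mono mult_left_mono)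
  also have "\<dots> = (\<Sum>k<r. eps k (bs k) l n) + (\<Sum>k<K. eps k (bs k) l' n')"
    unfolding sum_lessThan_add_shift shifted
    using eps_add_high_even[OF _ high(3,4)] by simp
  also have "\<dots> = Sum_any (\<lambda>k. eps k (bs k) l n) + Sum_any (\<lambda>k. eps k (bs k) l' n')"
    using low high \<open>n' < 2 ^ K\<close> by (simp add: Sum_any_eps_eq_sum_lessThan[OF bs])
  finally show ?thesis ..
qed

lemma Evec_nth:
  "j < m \<Longrightarrow> Evec k b s d m ! j = eps k b (int (s + j * d)) (int (s + (j + 1) * d))"
  by (simp add: Evec_def)

lemma Delta_nth:
  "j < m \<Longrightarrow> Delta bs s d m ! j = Sum_any (\<lambda>k. eps k (bs k) (int (s + j * d)) (int (s + (j + 1) * d)))"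
  by (simp add: Delta_def Evec_nth)

theorem lemma4p1:
  fixes bs :: "nat \<Rightarrow> int" and m s1 s2 d1 d2 r :: nat
  assumes hb: "\<forall>k. bs k \<in> {1, -1}"
    and hm: "m \<ge> 1"
    and hd1: "d1 \<ge> 1" and hd2: "d2 \<ge> 1"
    and he: "even s2" "even d2"
    and hr: "2 ^ r > s1 + m * d1"
    and hi: "\<forall>i. Evec i 1 s2 d2 m \<noteq> Evec i (-1) s2 d2 m \<longrightarrow> bs i = bs (i + r)"
  shows "vadd (Delta bs s1 d1 m) (Delta bs s2 d2 m) = Delta bs (s1 + 2 ^ r * s2) (d1 + 2 ^ r * d2) m"
proof (rule nth_equalityI)
  fix j assume "j < length (vadd (Delta bs s1 d1 m) (Delta bs s2 d2 m))"
  then have j: "j < m"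
    by (simp add: vadd_def Delta_def)
  have "s1 + (j + 1) * d1 \<le> s1 + m * d1"
    using j by (intro add_left_mono mult_le_mono1) simp
  then have "s1 + (j + 1) * d1 < 2 ^ r"
    using hr by linarith
  then have "int (s1 + (j + 1) * d1) < 2 ^ r"
    by (metis of_nat_less_iff of_nat_numeral of_nat_power)
  moreover have "\<forall>k. eps k 1 (int (s2 + j * d2)) (int (s2 + (j + 1) * d2))
      \<noteq> eps k (-1) (int (s2 + j * d2)) (int (s2 + (j + 1) * d2)) \<longrightarrow> bs k = bs (k + r)"
    using hi j by (metis Evec_nth)
  ultimately have "Delta bs s1 d1 m ! j + Delta bs s2 d2 m ! j =
      Delta bs (s1 + 2 ^ r * s2) (d1 + 2 ^ r * d2) m ! j"
    using Sum_any_eps_concat[OF hb, of "int (s1 + j * d1)" "int (s1 + (j + 1) * d1)" r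
        "int (s2 + j * d2)" "int (s2 + (j + 1) * d2)"] he j
    by (simp add: Delta_nth algebra_simps)
  then show "vadd (Delta bs s1 d1 m) (Delta bs s2 d2 m) ! j = Delta bs (s1 + 2 ^ r * s2) (d1 + 2 ^ r * d2) m ! j"
    using j by (simp add: vadd_def Delta_def)
qed (simp add: vadd_def Delta_def)

end
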